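(* Let $\mathbf m_1,\mathbf m_2,\mathbf m_3\in\mathbb R^3$ and $t_1,t_2,t_3,t_4\in\mathbb R$, and let $$\mathbf A_1=\begin{bmatrix}\mathbf m_1^T & t_1\\ \mathbf m_3^T & t_3\end{bmatrix},\qquad \mathbf A_2=\begin{bmatrix}\mathbf m_2^T & t_2\\ \mathbf m_3^T & t_4\end{bmatrix},$$ where $\mathbf m_1,\mathbf m_3$ are linearly independent and $\mathbf m_2,\mathbf m_3$ are linearly independent. Then there exist unique upper-triangular $2\times 2$ real matrices $\mathbf K_1,\mathbf K_2$ with positive diagonal entries, unique unit vectors $\mathbf r_1,\mathbf r_2,\mathbf r_3\in\mathbb R^3$ with $\mathbf r_3\cdot\mathbf r_1=\mathbf r_3\cdot\mathbf r_2=0$, and unique reals $t_1',t_2',t_3',t_4'$ such that $$\mathbf A_1=\mathbf K_1\begin{bmatrix}\mathbf r_1^T & t_1'\\ \mathbf r_3^T & t_3'\end{bmatrix},\qquad \mathbf A_2=\mathbf K_2\begin{bmatrix}\mathbf r_2^T & t_2'\\ \mathbf r_3^T & t_4'\end{bmatrix}.$$ Moreover, if in addition the null spaces of $\mathbf A_1$ and $\mathbf A_2$ (the two slits, viewed as lines in $\mathbb P^3$) are skew lines with finite points, then: the angle between the direction vectors $\mathbf r_1\times\mathbf r_3$ and $\mathbf r_2\times\mathbf r_3$ of the two slits is $\theta=\arccos(\mathbf r_1\cdot\mathbf r_2)$, and the euclidean distance between the two slits is $|t_4'-t_3'|$.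
   Context: A pair $(\mathbf A_1,\mathbf A_2)$ of $2\times 4$ matrices represents a two-slit camera $\mathbb P^3\dashrightarrow\mathbb P^2$, $\mathbf x\mapsto\big(\mathbf a_1^T\mathbf x/\mathbf a_2^T\mathbf x,\ \mathbf b_1^T\mathbf x/\mathbf b_2^T\mathbf x,\ 1\big)$, where $\mathbf a_1,\mathbf a_2$ are the rows of $\mathbf A_1$ and $\mathbf b_1,\mathbf b_2$ the rows of $\mathbf A_2$; its slits are the lines in $\mathbb P^3$ given by the null spaces of $\mathbf A_1$ and $\mathbf A_2$. A camera with matrices of the displayed form (sharing $\mathbf m_3$ in the second rows) is called a parallel two-slit camera. Points of $\mathbb R^3$ are identified with $(X_1,X_2,X_3,1)^T\in\mathbb P^3$ with the standard euclidean metric. *)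

theory Defs
  imports "HOL-Analysis.Analysis"
begin

definition ext4 :: "real^3 \<Rightarrow> real \<Rightarrow> real^4" where
  "ext4 v t = vector [v$1, v$2, v$3, t]"

definition cam_mat :: "real^3 \<Rightarrow> real \<Rightarrow> real^3 \<Rightarrow> real \<Rightarrow> real^4^2" where
  "cam_mat u a w b = vector [ext4 u a, ext4 w b]"

definition lin_indep2 :: "real^3 \<Rightarrow> real^3 \<Rightarrow> bool" where
  "lin_indep2 u v \<longleftrightarrow> (\<forall>a b. a *\<^sub>R u + b *\<^sub>R v = 0 \<longrightarrow> a = 0 \<and> b = 0)"

definition upper_pos :: "real^2^2 \<Rightarrow> bool" where
  "upper_pos K \<longleftrightarrow> K$2$1 = 0 \<and> K$1$1 > 0 \<and> K$2$2 > 0"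

text \<open>Null space of a 2x4 matrix (the slit, as a 2-dim subspace of R^4, i.e. a line in P^3).\<close>
definition null_space :: "real^4^2 \<Rightarrow> (real^4) set" where
  "null_space A = {x. A *v x = 0}"

definition finite_pts :: "real^4^2 \<Rightarrow> (real^3) set" where
  "finite_pts A = {X. A *v ext4 X 1 = 0}"

text \<open>Two projective lines (given as subspaces) are skew: they share no projective point.\<close>
definition skew_slits :: "real^4^2 \<Rightarrow> real^4^2 \<Rightarrow> bool" where
  "skew_slits A B \<longleftrightarrow> null_space A \<inter> null_space B = {0}"

definition vec_angle :: "real^3 \<Rightarrow> real^3 \<Rightarrow> real" where
  "vec_angle u v = arccos ((u \<bullet> v) / (norm u * norm v))"

end

theory Submission
  imports Defs
begin

text \<open>Row-wise the factorisation A = K [r s; r' s'] with K upper triangular is Gram-Schmidt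
  run backwards through the rows: the second row of A forces r' to be its normalised
  3-vector part, and the first row minus its projection on r' forces r. In the parallel
  camera both second rows share m3, so both factorisations produce the same r3 and the
  two slits lie in the parallel planes r3 \<bullet> X = -s3 and r3 \<bullet> X = -s4. The slit directions
  r1 \<times> r3 and r2 \<times> r3 are unit vectors whose inner product is r1 \<bullet> r2, and as soon as the
  slits are skew their projections along r3 meet, so the distance of the two slits is
  the distance |s4 - s3| of the two planes.\<close>

definition rq_factorization ::
    "real^4^2 \<Rightarrow> real^2^2 \<Rightarrow> real^3 \<Rightarrow> real \<Rightarrow> real^3 \<Rightarrow> real \<Rightarrow> bool" where
  "rq_factorization A K r s r' s' \<longleftrightarrow>
     upper_pos K \<and> norm r = 1 \<and> norm r' = 1 \<and> r' \<bullet> r = 0 \<and> A = K ** cam_mat r s r' s'"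

lemma ext4_nth [simp]:
  "ext4 v t $ 1 = v $ 1" "ext4 v t $ 2 = v $ 2" "ext4 v t $ 3 = v $ 3" "ext4 v t $ 4 = t"
  unfolding ext4_def vector_def by simp_all

lemma ext4_eq_0_iff: "ext4 v t = 0 \<longleftrightarrow> v = 0 \<and> t = 0"
  by (auto simp: vec_eq_iff forall_4 forall_3)

lemma cam_mat_nth [simp]: "cam_mat u a w b $ 1 = ext4 u a" "cam_mat u a w b $ 2 = ext4 w b"
  unfolding cam_mat_def by simp_all

lemma cam_mat_eq_mult_iff:
  "cam_mat u a w b = K ** cam_mat r s r' s' \<longleftrightarrow>
    u = K$1$1 *\<^sub>R r + K$1$2 *\<^sub>R r' \<and> a = K$1$1 * s + K$1$2 * s' \<and>
    w = K$2$1 *\<^sub>R r + K$2$2 *\<^sub>R r' \<and> b = K$2$1 * s + K$2$2 * s'"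
  unfolding vec_eq_iff[of "cam_mat u a w b"] forall_2 matrix_matrix_mult_def
  by (simp add: sum_2 vec_eq_iff forall_4 forall_3 del: ext4_nth cam_mat_nth) (simp add: conj_ac)

lemma cam_mat_mult_ext4_eq_0_iff:
  "cam_mat u a w b *v ext4 X c = 0 \<longleftrightarrow> u \<bullet> X + a * c = 0 \<and> w \<bullet> X + b * c = 0"
  by (simp add: vec_eq_iff forall_2 matrix_vector_mult_def sum_4 inner_vec_def sum_3)

lemma upper_pos_mult_eq_0_iff: "upper_pos K \<Longrightarrow> K *v y = 0 \<longleftrightarrow> y = 0"
  by (auto simp: upper_pos_def vec_eq_iff forall_2 matrix_vector_mult_def sum_2)

lemma eq_vector_2x2I:
  "K$1$1 = a \<Longrightarrow> K$1$2 = b \<Longrightarrow> K$2$1 = c \<Longrightarrow> K$2$2 = d \<Longrightarrow>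
    K = (vector [vector [a, b], vector [c, d]] :: 'a::zero^2^2)"
  by (simp add: vec_eq_iff forall_2 vector_def)

lemma rq_factorization_cam_mat_determined:
  assumes "rq_factorization (cam_mat m a w b) K r s r' s'"
  defines "p \<equiv> m - (m \<bullet> sgn w) *\<^sub>R sgn w"
  shows "r' = sgn w" "s' = b / norm w" "r = sgn p" "s = (a - (m \<bullet> sgn w) * s') / norm p"
    and "K = vector [vector [norm p, m \<bullet> sgn w], vector [0, norm w]]"
proof -
  have up: "K$2$1 = 0" "K$1$1 > 0" "K$2$2 > 0" and unit: "norm r = 1" "norm r' = 1"
    and orth: "r' \<bullet> r = 0"
    using assms(1) by (auto simp: rq_factorization_def upper_pos_def)
  have m: "m = K$1$1 *\<^sub>R r + K$1$2 *\<^sub>R r'" and a: "a = K$1$1 * s + K$1$2 * s'"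
    and w: "w = K$2$2 *\<^sub>R r'" and b: "b = K$2$2 * s'"
    using assms(1) up by (auto simp: rq_factorization_def cam_mat_eq_mult_iff)
  have K22: "K$2$2 = norm w" using w unit up by simp
  show r': "r' = sgn w" using up unit by (simp add: w sgn_div_norm)
  show s': "s' = b / norm w" using b K22 up by simp
  have "r' \<bullet> r' = 1" "r \<bullet> r' = 0" using unit orth by (simp_all add: norm_eq_1 inner_commute)
  then have K12: "K$1$2 = m \<bullet> sgn w" unfolding r'[symmetric] m by (simp add: inner_add_left)
  have p: "p = K$1$1 *\<^sub>R r" unfolding p_def K12[symmetric] unfolding r'[symmetric] by (simp add: m)
  have K11: "K$1$1 = norm p" using p unit up by simp
  show "r = sgn p" using up unit by (simp add: p sgn_div_norm)
  show "s = (a - (m \<bullet> sgn w) * s') / norm p" using a K11 K12 up by (simp add: field_simps)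
  show "K = vector [vector [norm p, m \<bullet> sgn w], vector [0, norm w]]"
    by (rule eq_vector_2x2I[OF K11 K12 up(1) K22])
qed

lemma rq_factorization_cam_mat_unique:
  assumes "rq_factorization (cam_mat m a w b) K r s r' s'"
    and "rq_factorization (cam_mat m a w b) L u t u' t'"
  shows "K = L \<and> r = u \<and> s = t \<and> r' = u' \<and> s' = t'"
  using rq_factorization_cam_mat_determined[OF assms(1)] rq_factorization_cam_mat_determined[OF assms(2)]
  by simp

lemma rq_factorization_cam_mat_exists:
  assumes "lin_indep2 m w"
  shows "\<exists>K r s r' s'. rq_factorization (cam_mat m a w b) K r s r' s'"
proof -
  define k where "k = m \<bullet> sgn w"
  define p where "p = m - k *\<^sub>R sgn w"
  define K :: "real^2^2" where "K = vector [vector [norm p, k], vector [0, norm w]]"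
  have "w \<noteq> 0"
    using assms unfolding lin_indep2_def by (metis add_0 one_neq_zero scaleR_one scaleR_zero_left)
  hence nw: "norm w > 0" and unit_w: "sgn w \<bullet> sgn w = 1" by (simp_all add: norm_eq_1[symmetric] norm_sgn)
  have "p \<noteq> 0"
  proof
    assume "p = 0"
    hence "1 *\<^sub>R m + (- (k / norm w)) *\<^sub>R w = 0" by (simp add: p_def sgn_div_norm divide_inverse)
    thus False using assms unfolding lin_indep2_def by fastforce
  qed
  hence np: "norm p > 0" by simp
  have "sgn w \<bullet> p = 0" by (simp add: p_def inner_diff_right unit_w k_def inner_commute)
  hence orth: "sgn w \<bullet> sgn p = 0" by (simp add: sgn_div_norm)
  have "cam_mat m a w b = K ** cam_mat (sgn p) ((a - k * (b / norm w)) / norm p) (sgn w) (b / norm w)"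
    unfolding cam_mat_eq_mult_iff K_def using np nw
    by (simp add: sgn_div_norm p_def field_simps)
  moreover have "upper_pos K" using np nw by (simp add: upper_pos_def K_def)
  ultimately have "rq_factorization (cam_mat m a w b)
      K (sgn p) ((a - k * (b / norm w)) / norm p) (sgn w) (b / norm w)"
    using orth np nw by (simp add: rq_factorization_def norm_sgn)
  then show ?thesis by blast
qed

lemma ex1_parallel_rq_factorization:
  assumes "lin_indep2 m1 m3" and "lin_indep2 m2 m3"
  shows "\<exists>!(K1, K2, r1, r2, r3, s1, s2, s3, s4).
           rq_factorization (cam_mat m1 t1 m3 t3) K1 r1 s1 r3 s3 \<and>
           rq_factorization (cam_mat m2 t2 m3 t4) K2 r2 s2 r3 s4"
proof -
  obtain K1 r1 s1 r3 s3 where F1: "rq_factorization (cam_mat m1 t1 m3 t3) K1 r1 s1 r3 s3"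
    using rq_factorization_cam_mat_exists[OF assms(1)] by blast
  obtain K2 r2 s2 r3' s4 where F2: "rq_factorization (cam_mat m2 t2 m3 t4) K2 r2 s2 r3' s4"
    using rq_factorization_cam_mat_exists[OF assms(2)] by blast
  have "r3' = r3"
    using rq_factorization_cam_mat_determined(1)[OF F1] rq_factorization_cam_mat_determined(1)[OF F2]
    by simp
  with F1 F2 show ?thesis
    by (intro ex1I[where a = "(K1, K2, r1, r2, r3, s1, s2, s3, s4)"])
      (auto dest: rq_factorization_cam_mat_unique)
qed

lemma finite_pts_rq_factorization:
  "rq_factorization A K r s r' s' \<Longrightarrow> finite_pts A = {X. r \<bullet> X + s = 0 \<and> r' \<bullet> X + s' = 0}"
  unfolding finite_pts_def rq_factorization_def
  by (simp add: matrix_vector_mul_assoc[symmetric] upper_pos_mult_eq_0_iff cam_mat_mult_ext4_eq_0_iff)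

lemma ext4_direction_in_null_space:
  "rq_factorization A K r s r' s' \<Longrightarrow> r \<bullet> d = 0 \<Longrightarrow> r' \<bullet> d = 0 \<Longrightarrow> ext4 d 0 \<in> null_space A"
  unfolding null_space_def rq_factorization_def
  by (simp add: matrix_vector_mul_assoc[symmetric] upper_pos_mult_eq_0_iff cam_mat_mult_ext4_eq_0_iff)

lemma norm_cross3_orthonormal:
  "norm r = 1 \<Longrightarrow> norm r' = 1 \<Longrightarrow> r \<bullet> r' = 0 \<Longrightarrow> norm (cross3 r r') = 1"
  using norm_cross_dot[of r r'] norm_ge_zero[of "cross3 r r'"] by (simp add: power2_eq_1_iff)

lemma orthogonal_orthonormal_pair_eq_cross3:
  assumes "norm r = 1" "norm r' = 1" "r \<bullet> r' = 0" "r \<bullet> d = 0" "r' \<bullet> d = 0"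
  shows "d = (cross3 r r' \<bullet> d) *\<^sub>R cross3 r r'"
proof -
  let ?n = "cross3 r r'"
  have "?n \<bullet> ?n = 1" using norm_cross3_orthonormal[OF assms(1-3)] by (simp add: norm_eq_1)
  moreover have "cross3 ?n d = 0"
    using assms by (simp add: cross_skew[of ?n] Lagrange inner_commute)
  ultimately show ?thesis using Lagrange[of ?n ?n d] by simp
qed

lemma slit_direction:
  assumes "norm r = 1" "norm r' = 1" "r' \<bullet> r = 0"
    and "p \<in> {X. r \<bullet> X + s = 0 \<and> r' \<bullet> X + s' = 0}" "q \<in> {X. r \<bullet> X + s = 0 \<and> r' \<bullet> X + s' = 0}"
  shows "\<exists>c. p - q = c *\<^sub>R cross3 r r'"
  using assms orthogonal_orthonormal_pair_eq_cross3[of r r' "p - q"]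
  by (auto simp: inner_diff_right inner_commute)

lemma vec_angle_cross3_common_factor:
  assumes "norm r1 = 1" "norm r2 = 1" "norm r3 = 1" "r3 \<bullet> r1 = 0" "r3 \<bullet> r2 = 0"
  shows "vec_angle (cross3 r1 r3) (cross3 r2 r3) = arccos (r1 \<bullet> r2)"
proof -
  have "norm (cross3 r1 r3) = 1" "norm (cross3 r2 r3) = 1"
    using assms norm_cross3_orthonormal by (simp_all add: inner_commute)
  moreover have "cross3 r1 r3 \<bullet> cross3 r2 r3 = r1 \<bullet> r2"
    using assms by (simp add: dot_cross inner_commute norm_eq_1)
  ultimately show ?thesis by (simp add: vec_angle_def)
qed

text \<open>Non-parallel lines in the planes r3 \<bullet> X = -s3 and r3 \<bullet> X = -s4 have a common
  perpendicular along r3, whose length is the distance of the planes.\<close>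

lemma setdist_lines_parallel_planes:
  assumes "norm r1 = 1" "norm r3 = 1" "r3 \<bullet> r1 = 0" "r3 \<bullet> r2 = 0" "r2 \<bullet> cross3 r1 r3 \<noteq> 0"
  shows "setdist {X. r1 \<bullet> X + s1 = 0 \<and> r3 \<bullet> X + s3 = 0} {X. r2 \<bullet> X + s2 = 0 \<and> r3 \<bullet> X + s4 = 0}
           = \<bar>s4 - s3\<bar>" (is "setdist ?L1 ?L2 = _")
proof (rule antisym)
  let ?n = "cross3 r1 r3"
  define p where
    "p = (- s1) *\<^sub>R r1 + (- s3) *\<^sub>R r3 + ((s1 * (r1 \<bullet> r2) - s2) / (r2 \<bullet> ?n)) *\<^sub>R ?n"
  have unit: "r1 \<bullet> r1 = 1" "r3 \<bullet> r3 = 1" using assms(1,2) by (simp_all add: norm_eq_1)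
  have p: "r1 \<bullet> p = - s1" "r3 \<bullet> p = - s3" "r2 \<bullet> p = - s2"
    using unit assms(3-5)
    by (simp_all add: p_def inner_add_right inner_diff_right dot_cross_self inner_commute)
  have L1: "p \<in> ?L1" and L2: "p + (s3 - s4) *\<^sub>R r3 \<in> ?L2"
    using p unit assms(3,4) by (simp_all add: inner_add_right inner_commute)
  have "dist p (p + (s3 - s4) *\<^sub>R r3) = \<bar>s4 - s3\<bar>" using assms(2) by (simp add: dist_norm)
  then show "setdist ?L1 ?L2 \<le> \<bar>s4 - s3\<bar>" using setdist_le_dist[OF L1 L2] by simp
  show "\<bar>s4 - s3\<bar> \<le> setdist ?L1 ?L2"
  proof (rule le_setdistI)
    fix x y assume "x \<in> ?L1" "y \<in> ?L2"
    hence "r3 \<bullet> (x - y) = s4 - s3" by (auto simp: inner_diff_right)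
    thus "\<bar>s4 - s3\<bar> \<le> dist x y"
      using Cauchy_Schwarz_ineq2[of r3 "x - y"] assms(2) by (simp add: dist_norm)
  qed (use L1 L2 in auto)
qed

text \<open>Otherwise r1 \<times> r3 is a common point at infinity of the two slits.\<close>

lemma skew_slits_imp_not_parallel:
  assumes "skew_slits A1 A2"
    and F1: "rq_factorization A1 K1 r1 s1 r3 s3" and F2: "rq_factorization A2 K2 r2 s2 r3 s4"
  shows "r2 \<bullet> cross3 r1 r3 \<noteq> 0"
proof
  let ?n = "cross3 r1 r3"
  assume "r2 \<bullet> ?n = 0"
  have "ext4 ?n 0 \<in> null_space A1"
    by (rule ext4_direction_in_null_space[OF F1]) (simp_all add: dot_cross_self)
  moreover have "ext4 ?n 0 \<in> null_space A2"
    by (rule ext4_direction_in_null_space[OF F2]) (simp_all add: dot_cross_self \<open>r2 \<bullet> ?n = 0\<close>)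
  moreover have "norm r1 = 1" "norm r3 = 1" "r1 \<bullet> r3 = 0"
    using F1 by (simp_all add: rq_factorization_def inner_commute)
  then have "ext4 ?n 0 \<noteq> 0"
    using norm_cross3_orthonormal[of r1 r3] by (auto simp: ext4_eq_0_iff)
  ultimately show False using assms(1) by (auto simp: skew_slits_def)
qed

lemma parallel_slits_geometry:
  assumes skew: "skew_slits A1 A2"
    and F1: "rq_factorization A1 K1 r1 s1 r3 s3" and F2: "rq_factorization A2 K2 r2 s2 r3 s4"
  shows "(\<forall>p\<in>finite_pts A1. \<forall>q\<in>finite_pts A1. \<exists>c. p - q = c *\<^sub>R cross3 r1 r3) \<and>
         (\<forall>p\<in>finite_pts A2. \<forall>q\<in>finite_pts A2. \<exists>c. p - q = c *\<^sub>R cross3 r2 r3) \<and>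
         vec_angle (cross3 r1 r3) (cross3 r2 r3) = arccos (r1 \<bullet> r2) \<and>
         setdist (finite_pts A1) (finite_pts A2) = \<bar>s4 - s3\<bar>"
proof -
  have unit: "norm r1 = 1" "norm r2 = 1" "norm r3 = 1" and orth: "r3 \<bullet> r1 = 0" "r3 \<bullet> r2 = 0"
    using F1 F2 by (simp_all add: rq_factorization_def)
  show ?thesis
    unfolding finite_pts_rq_factorization[OF F1] finite_pts_rq_factorization[OF F2]
    using slit_direction[OF unit(1,3) orth(1)] slit_direction[OF unit(2,3) orth(2)]
      vec_angle_cross3_common_factor[OF unit orth]
      setdist_lines_parallel_planes[OF unit(1,3) orth skew_slits_imp_not_parallel[OF skew F1 F2]]
    by blast
qed

theorem mainTheorem2:
  fixes m1 m2 m3 :: "real^3" and t1 t2 t3 t4 :: real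
  assumes "lin_indep2 m1 m3" and "lin_indep2 m2 m3"
  shows "(\<exists>!(K1, K2, r1, r2, r3, s1, s2, s3, s4).
            upper_pos K1 \<and> upper_pos K2 \<and>
            norm r1 = 1 \<and> norm r2 = 1 \<and> norm r3 = 1 \<and>
            r3 \<bullet> r1 = 0 \<and> r3 \<bullet> r2 = 0 \<and>
            cam_mat m1 t1 m3 t3 = K1 ** cam_mat r1 s1 r3 s3 \<and>
            cam_mat m2 t2 m3 t4 = K2 ** cam_mat r2 s2 r3 s4)
       \<and> (skew_slits (cam_mat m1 t1 m3 t3) (cam_mat m2 t2 m3 t4) \<longrightarrow>
          (\<forall>K1 K2 r1 r2 r3 s1 s2 s3 s4.
             upper_pos K1 \<and> upper_pos K2 \<and>
             norm r1 = 1 \<and> norm r2 = 1 \<and> norm r3 = 1 \<and>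
             r3 \<bullet> r1 = 0 \<and> r3 \<bullet> r2 = 0 \<and>
             cam_mat m1 t1 m3 t3 = K1 ** cam_mat r1 s1 r3 s3 \<and>
             cam_mat m2 t2 m3 t4 = K2 ** cam_mat r2 s2 r3 s4 \<longrightarrow>
             (\<forall>p\<in>finite_pts (cam_mat m1 t1 m3 t3). \<forall>q\<in>finite_pts (cam_mat m1 t1 m3 t3).
                 \<exists>c. p - q = c *\<^sub>R cross3 r1 r3) \<and>
             (\<forall>p\<in>finite_pts (cam_mat m2 t2 m3 t4). \<forall>q\<in>finite_pts (cam_mat m2 t2 m3 t4).
                 \<exists>c. p - q = c *\<^sub>R cross3 r2 r3) \<and>
             vec_angle (cross3 r1 r3) (cross3 r2 r3) = arccos (r1 \<bullet> r2) \<and>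
             setdist (finite_pts (cam_mat m1 t1 m3 t3)) (finite_pts (cam_mat m2 t2 m3 t4))
               = \<bar>s4 - s3\<bar>))"
proof (rule conjI)
  show "\<exists>!(K1, K2, r1, r2, r3, s1, s2, s3, s4). upper_pos K1 \<and> upper_pos K2 \<and>
      norm r1 = 1 \<and> norm r2 = 1 \<and> norm r3 = 1 \<and> r3 \<bullet> r1 = 0 \<and> r3 \<bullet> r2 = 0 \<and>
      cam_mat m1 t1 m3 t3 = K1 ** cam_mat r1 s1 r3 s3 \<and> cam_mat m2 t2 m3 t4 = K2 ** cam_mat r2 s2 r3 s4"
    using ex1_parallel_rq_factorization[OF assms, of t1 t3 t2 t4]
    unfolding rq_factorization_def by (simp only: conj_ac conj_left_absorb)
qed (use parallel_slits_geometry in \<open>auto simp only: rq_factorization_def\<close>)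

end
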